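(* For every integer $l\ge 0$, the ideal $I_l\subset\mathbb{Z}[q,q^{-1}]$ is principal; it equals $g_l\,\mathbb{Z}[q,q^{-1}]$, where $g_l=\mathrm{GCD}(f_{l,0},\dots,f_{l,l})$. Moreover, up to a unit of $\mathbb{Z}[q,q^{-1}]$, $$g_l=\prod_{m\ge 1}\Phi_m^{t_{l,m}},\qquad t_{l,m}=\begin{cases}\lfloor \tfrac{l+1}{m}\rfloor-1 & \text{for } 1\le m\le l,\\ 0 & \text{for } m>l.\end{cases}$$
   Context: Work in the ring $\mathbb{Z}[q,q^{-1}]$ of Laurent polynomials, a unique factorization domain whose units are $\pm q^j$. For $i\in\mathbb{Z}$ and $n\ge 0$ set $\{i\}_q=q^i-1$, $\{i\}_{q,n}=\{i\}_q\{i-1\}_q\cdots\{i-n+1\}_q$ (the empty product, equal to $1$, when $n=0$), and $\{n\}_q!=\{n\}_{q,n}$ (so $\{0\}_q!=1$). For $0\le k\le l$ set $f_{l,k}=\{l-k\}_q!\,\{k\}_q!$, and let $I_l$ be the ideal of $\mathbb{Z}[q,q^{-1}]$ generated by $f_{l,0},\dots,f_{l,l}$. $\mathrm{GCD}$ denotes a greatest common divisor in $\mathbb{Z}[q,q^{-1}]$ (defined up to units). $\Phi_m=\prod_{d\mid m}(q^d-1)^{\mu(m/d)}$ is the $m$th cyclotomic polynomial ($\mu$ the Möbius function), and $\lfloor r\rfloor$ is the largest integer $\le r$. *)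

theory Defs
  imports "HOL-Computational_Algebra.Computational_Algebra"
begin

text \<open>The ring Z[q,q^-1] is realised as the subring LP of the field of formal
Laurent series over the rationals consisting of series with finite support
and integer coefficients; q is fls_X (so q^i is fls_X_intpow i).  Working inside the field allows the
literal definition of cyclotomic polynomials with integer (Moebius) exponents.\<close>

definition LP :: "rat fls set" where
  "LP = {x. finite {n. fls_nth x n \<noteq> 0} \<and> (\<forall>n. fls_nth x n \<in> \<int>)}"


definition qbr :: "int \<Rightarrow> rat fls" where
  "qbr i = fls_X_intpow i - 1"

definition qbrn :: "int \<Rightarrow> nat \<Rightarrow> rat fls" where
  "qbrn i n = (\<Prod>j<n. qbr (i - int j))"

definition qfact :: "nat \<Rightarrow> rat fls" where
  "qfact n = qbrn (int n) n"

definition fq :: "nat \<Rightarrow> nat \<Rightarrow> rat fls" where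
  "fq l k = qfact (l - k) * qfact k"

definition Iq :: "nat \<Rightarrow> rat fls set" where
  "Iq l = {x. \<exists>c. (\<forall>k\<le>l. c k \<in> LP) \<and> x = (\<Sum>k\<le>l. c k * fq l k)}"

definition ldvd :: "rat fls \<Rightarrow> rat fls \<Rightarrow> bool" where
  "ldvd a b \<longleftrightarrow> (\<exists>c\<in>LP. b = a * c)"

definition lunit :: "rat fls \<Rightarrow> bool" where
  "lunit u \<longleftrightarrow> u \<in> LP \<and> (\<exists>v\<in>LP. u * v = 1)"

definition is_lgcd :: "rat fls \<Rightarrow> nat \<Rightarrow> bool" where
  "is_lgcd g l \<longleftrightarrow> g \<in> LP \<and> (\<forall>k\<le>l. ldvd g (fq l k)) \<and>
     (\<forall>d\<in>LP. (\<forall>k\<le>l. ldvd d (fq l k)) \<longrightarrow> ldvd d g)"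

definition moebius :: "nat \<Rightarrow> int" where
  "moebius n = (if squarefree n then (-1) ^ card (prime_factors n) else 0)"

definition cyclo :: "nat \<Rightarrow> rat fls" where
  "cyclo m = (\<Prod>d\<in>{d. d dvd m}. (fls_X_intpow (int d) - 1) powi moebius (m div d))"

definition texp :: "nat \<Rightarrow> nat \<Rightarrow> int" where
  "texp l m = (if 1 \<le> m \<and> m \<le> l then \<lfloor>real (l + 1) / real m\<rfloor> - 1 else 0)"

end

theory Submission
  imports Defs
begin

(* Writing {n}_q = prod_{d|n} Phi_d gives {n}_q! = prod_d Phi_d^floor(n/d), hence
   f_{l,k} = g_l * h_{l,k}, where Phi_d occurs in h_{l,k} with exponent 0 or 1, and with exponent
   0 when d | k+1.  It remains to show that h_{l,0}, ..., h_{l,l} generate the unit ideal J_l.  By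
   downward induction on m, Phi_m is a unit modulo J_l: the generator h_{l,m-1} contains no Phi_d
   with d | m, its factors Phi_d with d > m are units modulo J_l by induction, and those with
   d < m, d not dividing m, are coprime to Phi_m in Z[q,q^-1] (a Bezout identity obtained from
   the q-analogue of the Euclidean algorithm).  Finally h_{l,l} is in J_l and a unit modulo J_l. *)

unbundle fps_syntax

section \<open>Subrings of the Laurent series field\<close>

text \<open>Three instances
  matter: \<open>QP = \<rat>[q,q\<inverse>]\<close> (finite support), \<open>ZS\<close> (integer coefficients) and their
  intersection \<open>LP = \<int>[q,q\<inverse>]\<close>.\<close>
definition lsubring :: "rat fls set \<Rightarrow> bool" where
  "lsubring R \<longleftrightarrow> (\<forall>x\<in>R. \<forall>y\<in>R. x + y \<in> R \<and> x * y \<in> R \<and> - x \<in> R) \<and> (\<forall>i. fls_X_intpow i \<in> R)"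

context
  fixes R :: "rat fls set"
  assumes R: "lsubring R"
begin

lemma lsub_add: "x \<in> R \<Longrightarrow> y \<in> R \<Longrightarrow> x + y \<in> R"
  using R by (simp add: lsubring_def)

lemma lsub_mult: "x \<in> R \<Longrightarrow> y \<in> R \<Longrightarrow> x * y \<in> R"
  using R by (simp add: lsubring_def)

lemma lsub_uminus: "x \<in> R \<Longrightarrow> - x \<in> R"
  using R by (simp add: lsubring_def)

lemma lsub_X: "fls_X_intpow i \<in> R"
  using R by (simp add: lsubring_def)

lemma lsub_one: "1 \<in> R"
  using lsub_X[of 0] by simp

lemma lsub_zero: "0 \<in> R"
  using lsub_add[OF lsub_one lsub_uminus[OF lsub_one]] by simp

lemma lsub_diff: "x \<in> R \<Longrightarrow> y \<in> R \<Longrightarrow> x - y \<in> R"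
  using lsub_add[of x "- y"] lsub_uminus[of y] by simp

lemma lsub_of_nat: "of_nat n \<in> R"
  by (induction n) (auto intro: lsub_zero lsub_one lsub_add)

lemma lsub_power: "x \<in> R \<Longrightarrow> x ^ n \<in> R"
  by (induction n) (auto intro: lsub_one lsub_mult)

lemma lsub_sum: "(\<And>i. i \<in> A \<Longrightarrow> f i \<in> R) \<Longrightarrow> sum f A \<in> R"
  by (induction A rule: infinite_finite_induct) (auto intro: lsub_zero lsub_add)

lemma lsub_prod: "(\<And>i. i \<in> A \<Longrightarrow> f i \<in> R) \<Longrightarrow> prod f A \<in> R"
  by (induction A rule: infinite_finite_induct) (auto intro: lsub_one lsub_mult)

end

lemma lsubring_Int: "lsubring R \<Longrightarrow> lsubring S \<Longrightarrow> lsubring (R \<inter> S)"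
  unfolding lsubring_def by blast

definition QP :: "rat fls set" where "QP = {x. finite {n. x $$ n \<noteq> 0}}"
definition ZS :: "rat fls set" where "ZS = {x. \<forall>n. x $$ n \<in> \<int>}"

lemma LP_eq: "LP = QP \<inter> ZS"
  by (auto simp: LP_def QP_def ZS_def)

lemma lsubring_QP: "lsubring QP"
  unfolding lsubring_def
proof (intro conjI ballI allI)
  fix x y assume x: "x \<in> QP" and y: "y \<in> QP"
  let ?A = "{n. x $$ n \<noteq> 0}" and ?B = "{n. y $$ n \<noteq> 0}"
  have "{n. (x * y) $$ n \<noteq> 0} \<subseteq> (\<lambda>(i, j). i + j) ` (?A \<times> ?B)"
  proof
    fix n assume "n \<in> {n. (x * y) $$ n \<noteq> 0}"
    then have "(\<Sum>i=fls_subdegree x..n - fls_subdegree y. x $$ i * y $$ (n - i)) \<noteq> 0"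
      by (simp add: fls_times_nth(2))
    then obtain i where "x $$ i * y $$ (n - i) \<noteq> 0"
      by (meson sum.neutral)
    then show "n \<in> (\<lambda>(i, j). i + j) ` (?A \<times> ?B)"
      by (auto intro!: image_eqI[of _ _ "(i, n - i)"])
  qed
  then show "x * y \<in> QP"
    using x y unfolding QP_def by (auto intro: finite_subset)
  have "{n. (x + y) $$ n \<noteq> 0} \<subseteq> ?A \<union> ?B" by auto
  then show "x + y \<in> QP"
    using x y unfolding QP_def by (auto intro: finite_subset)
  show "- x \<in> QP" using x unfolding QP_def by simp
next
  fix i :: int
  have "{n. fls_X_intpow i $$ n \<noteq> (0::rat)} \<subseteq> {i}" by auto
  then show "fls_X_intpow i \<in> QP" unfolding QP_def by (auto intro: finite_subset)
qed

lemma lsubring_ZS: "lsubring ZS"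
  unfolding lsubring_def ZS_def by (auto intro!: Ints_mult simp: fls_times_nth(2))

lemma lsubring_LP: "lsubring LP"
  using lsubring_Int[OF lsubring_QP lsubring_ZS] by (simp add: LP_eq)

lemma fls_const_QP: "fls_const c \<in> QP"
proof -
  have "{n. fls_const c $$ n \<noteq> 0} \<subseteq> {0}" by auto
  then show ?thesis unfolding QP_def by (auto intro: finite_subset)
qed

section \<open>Divisibility, coprimality and units modulo an ideal\<close>

definition rdvd :: "rat fls set \<Rightarrow> rat fls \<Rightarrow> rat fls \<Rightarrow> bool" where
  "rdvd R a b \<longleftrightarrow> (\<exists>c\<in>R. b = a * c)"

definition rcoprime :: "rat fls set \<Rightarrow> rat fls \<Rightarrow> rat fls \<Rightarrow> bool" where
  "rcoprime R a b \<longleftrightarrow> (\<exists>u\<in>R. \<exists>v\<in>R. u * a + v * b = 1)"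

text \<open>An \<open>R\<close>-submodule \<open>I\<close> of the field (an ideal of \<open>R\<close> when \<open>I \<subseteq> R\<close>), and the statement
  that \<open>a\<close> is invertible modulo \<open>I\<close>, i.e.\ that \<open>I + aR\<close> contains \<open>1\<close>.\<close>
definition rideal :: "rat fls set \<Rightarrow> rat fls set \<Rightarrow> bool" where
  "rideal R I \<longleftrightarrow> 0 \<in> I \<and> (\<forall>x\<in>I. \<forall>y\<in>I. x + y \<in> I) \<and> (\<forall>x\<in>I. \<forall>r\<in>R. r * x \<in> I)"

definition unit_mod :: "rat fls set \<Rightarrow> rat fls set \<Rightarrow> rat fls \<Rightarrow> bool" where
  "unit_mod R I a \<longleftrightarrow> (\<exists>x\<in>I. \<exists>y\<in>R. x + a * y = 1)"

definition ideal_add :: "rat fls set \<Rightarrow> rat fls set \<Rightarrow> rat fls \<Rightarrow> rat fls set" where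
  "ideal_add R I b = {x + b * z | x z. x \<in> I \<and> z \<in> R}"

lemma rcoprime_sym: "rcoprime R a b \<Longrightarrow> rcoprime R b a"
  unfolding rcoprime_def by (metis add.commute)

lemma rcoprime_unit_mod: "rcoprime R a b \<longleftrightarrow> unit_mod R ((\<lambda>r. r * a) ` R) b"
  unfolding rcoprime_def unit_mod_def by (auto simp: mult.commute)

lemma unit_mod_mono: "I \<subseteq> I' \<Longrightarrow> unit_mod R I a \<Longrightarrow> unit_mod R I' a"
  unfolding unit_mod_def by blast

lemma unit_mod_ideal_add:
  assumes "rideal R I" "h \<in> I" "unit_mod R (ideal_add R I b) h"
  shows "unit_mod R I b"
proof -
  obtain x z y where xzy: "x \<in> I" "z \<in> R" "y \<in> R" "x + b * z + h * y = 1"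
    using assms(3) unfolding unit_mod_def ideal_add_def by auto
  have "x + y * h \<in> I" using assms(1,2) xzy unfolding rideal_def by blast
  moreover have "(x + y * h) + b * z = 1" using xzy(4) by (simp add: algebra_simps)
  ultimately show ?thesis using xzy unfolding unit_mod_def by blast
qed

lemma unit_mod_self:
  assumes "rideal R I" "h \<in> I" "unit_mod R I h"
  shows "1 \<in> I"
proof -
  obtain x y where "x \<in> I" "y \<in> R" "x + h * y = 1"
    using assms(3) unfolding unit_mod_def by auto
  with assms(1,2) show ?thesis unfolding rideal_def by (metis mult.commute)
qed

context
  fixes R :: "rat fls set"
  assumes R: "lsubring R"
begin

lemma rdvd_trans: "rdvd R a b \<Longrightarrow> rdvd R b c \<Longrightarrow> rdvd R a c"
  unfolding rdvd_def by (metis mult.assoc lsub_mult[OF R])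

lemma rcoprime_rdvd:
  assumes "rcoprime R a b" "rdvd R x a" "rdvd R y b"
  shows "rcoprime R x y"
proof -
  obtain u v where uv: "u \<in> R" "v \<in> R" "u * a + v * b = 1"
    using assms(1) rcoprime_def by auto
  obtain c d where cd: "c \<in> R" "a = x * c" "d \<in> R" "b = y * d"
    using assms(2,3) rdvd_def by auto
  have "(u * c) * x + (v * d) * y = 1"
    using uv cd by (simp add: algebra_simps)
  then show ?thesis
    unfolding rcoprime_def using uv cd lsub_mult[OF R] by blast
qed

lemma rideal_principal:
  assumes a: "a \<in> R" shows "rideal R ((\<lambda>r. r * a) ` R)"
  unfolding rideal_def
proof (intro conjI ballI)
  show "0 \<in> (\<lambda>r. r * a) ` R" using lsub_zero[OF R] by force
  fix x y assume "x \<in> (\<lambda>r. r * a) ` R" "y \<in> (\<lambda>r. r * a) ` R"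
  then obtain s t where "s \<in> R" "t \<in> R" "x = s * a" "y = t * a" by auto
  then show "x + y \<in> (\<lambda>r. r * a) ` R"
    by (auto simp: distrib_right intro: image_eqI[of _ _ "s + t"] lsub_add[OF R])
next
  fix x r assume "x \<in> (\<lambda>r. r * a) ` R" "r \<in> R"
  then obtain s where "s \<in> R" "x = s * a" by auto
  with \<open>r \<in> R\<close> show "r * x \<in> (\<lambda>r. r * a) ` R"
    by (auto simp: mult.assoc intro: image_eqI[of _ _ "r * s"] lsub_mult[OF R])
qed

lemma rideal_add:
  assumes I: "rideal R I" and b: "b \<in> R" shows "rideal R (ideal_add R I b)"
  unfolding rideal_def
proof (intro conjI ballI)
  show "0 \<in> ideal_add R I b"
    unfolding ideal_add_def using I lsub_zero[OF R] unfolding rideal_def by force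
  fix x y assume "x \<in> ideal_add R I b" "y \<in> ideal_add R I b"
  then obtain x1 z1 x2 z2 where "x1 \<in> I" "z1 \<in> R" "x2 \<in> I" "z2 \<in> R"
    "x = x1 + b * z1" "y = x2 + b * z2" unfolding ideal_add_def by auto
  moreover have "x1 + b * z1 + (x2 + b * z2) = (x1 + x2) + b * (z1 + z2)"
    by (simp add: algebra_simps)
  ultimately show "x + y \<in> ideal_add R I b"
    using I unfolding ideal_add_def rideal_def by (blast intro: lsub_add[OF R])
next
  fix x r assume "x \<in> ideal_add R I b" "r \<in> R"
  then obtain x1 z1 where "x1 \<in> I" "z1 \<in> R" "x = x1 + b * z1"
    unfolding ideal_add_def by auto
  moreover have "r * (x1 + b * z1) = r * x1 + b * (r * z1)"
    by (simp add: algebra_simps)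
  ultimately show "r * x \<in> ideal_add R I b"
    using I \<open>r \<in> R\<close> unfolding ideal_add_def rideal_def by (blast intro: lsub_mult[OF R])
qed

lemma ideal_add_supset: "rideal R I \<Longrightarrow> I \<subseteq> ideal_add R I b"
proof
  fix x assume "x \<in> I"
  moreover have "x = x + b * 0" by simp
  ultimately show "x \<in> ideal_add R I b" unfolding ideal_add_def using lsub_zero[OF R] by blast
qed

lemma ideal_add_supset_principal: "rideal R I \<Longrightarrow> (\<lambda>r. r * b) ` R \<subseteq> ideal_add R I b"
proof
  fix x assume "rideal R I" "x \<in> (\<lambda>r. r * b) ` R"
  then obtain r where "r \<in> R" "x = 0 + b * r" "0 \<in> I"
    unfolding rideal_def by (auto simp: mult.commute)
  then show "x \<in> ideal_add R I b" unfolding ideal_add_def by blast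
qed

lemma unit_mod_one: "rideal R I \<Longrightarrow> unit_mod R I 1"
  unfolding unit_mod_def rideal_def using lsub_one[OF R] by force

lemma unit_mod_mult:
  assumes I: "rideal R I" and a: "a \<in> R" "b \<in> R" and "unit_mod R I a" "unit_mod R I b"
  shows "unit_mod R I (a * b)"
proof -
  obtain x y where 1: "x \<in> I" "y \<in> R" "x + a * y = 1"
    using assms(4) unit_mod_def by auto
  obtain x' y' where 2: "x' \<in> I" "y' \<in> R" "x' + b * y' = 1"
    using assms(5) unit_mod_def by auto
  have "x + (a * y) * x' + (a * b) * (y * y') = x + a * y * (x' + b * y')"
    by (simp add: algebra_simps)
  also have "\<dots> = 1" using 1 2 by simp
  finally show ?thesis
    using I 1 2 a unfolding unit_mod_def rideal_def by (metis lsub_mult[OF R])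
qed

lemma unit_mod_prod_power:
  assumes I: "rideal R I" and "\<And>d. d \<in> S \<Longrightarrow> a d \<in> R"
    and "\<And>d. d \<in> S \<Longrightarrow> n d = 0 \<or> unit_mod R I (a d)"
  shows "unit_mod R I (\<Prod>d\<in>S. a d ^ n d)"
  using assms(2,3)
proof (induction S rule: infinite_finite_induct)
  case (insert d S)
  have "unit_mod R I (a d ^ m)" if "unit_mod R I (a d)" for m
    using that insert.prems by (induction m) (auto intro: unit_mod_one[OF I] unit_mod_mult[OF I] lsub_power[OF R])
  then have "unit_mod R I (a d ^ n d)"
    using insert.prems unit_mod_one[OF I] by force
  then show ?case
    using insert by (auto intro!: unit_mod_mult[OF I] lsub_power[OF R] lsub_prod[OF R])
qed (auto intro: unit_mod_one[OF I])

lemma rdvd_prod_coprime: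
  assumes "finite S" and "\<And>i. i \<in> S \<Longrightarrow> f i \<in> R" "\<And>i. i \<in> S \<Longrightarrow> rdvd R (f i) c" "c \<in> R"
    and "\<And>i j. i \<in> S \<Longrightarrow> j \<in> S \<Longrightarrow> i \<noteq> j \<Longrightarrow> rcoprime R (f i) (f j)"
  shows "rdvd R (prod f S) c"
  using assms
proof (induction S rule: finite_induct)
  case empty
  then show ?case unfolding rdvd_def by simp
next
  case (insert i S)
  have "unit_mod R ((\<lambda>r. r * f i) ` R) (\<Prod>j\<in>S. f j ^ 1)"
    using insert by (intro unit_mod_prod_power rideal_principal)
      (auto simp: rcoprime_unit_mod[symmetric])
  then have "rcoprime R (f i) (prod f S)"
    by (simp add: rcoprime_unit_mod)
  then obtain u v where uv: "u \<in> R" "v \<in> R" "u * f i + v * prod f S = 1"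
    unfolding rcoprime_def by auto
  obtain c1 c2 where c: "c1 \<in> R" "c = f i * c1" "c2 \<in> R" "c = prod f S * c2"
    using insert rdvd_def by (metis insertCI)
  have "c = (u * f i + v * prod f S) * c" using uv by simp
  also have "\<dots> = (f i * prod f S) * (u * c2 + v * c1)"
    using c by (simp add: algebra_simps)
  finally show ?case
    unfolding rdvd_def using insert.hyps uv c by (auto intro!: lsub_add[OF R] lsub_mult[OF R])
qed

end

section \<open>The \<open>q\<close>-numbers \<open>{n}\<^sub>q = q\<^sup>n - 1\<close>\<close>

abbreviation qnum :: "nat \<Rightarrow> rat fls" where "qnum n \<equiv> qbr (int n)"

lemma qnum_in: "lsubring R \<Longrightarrow> qnum n \<in> R"
  unfolding qbr_def by (intro lsub_diff lsub_X lsub_one)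

lemma qnum_nonzero: assumes "n > 0" shows "qnum n \<noteq> 0"
proof
  assume "qnum n = 0"
  then have "(fls_X_intpow (int n) :: rat fls) $$ int n = 1 $$ int n" by (simp add: qbr_def)
  then show False using assms by simp
qed

lemma qnum_mult: "qnum (g * k) = fls_X_intpow (int g) ^ k - 1"
  by (simp add: qbr_def fls_X_intpow_power mult.commute)

lemma qnum_add: "qnum (r + n) = qnum r + fls_X_intpow (int r) * qnum n"
  by (simp add: qbr_def fls_X_intpow_times_fls_X_intpow algebra_simps)

lemma qnum_rdvd:
  assumes R: "lsubring R" and "d dvd m" shows "rdvd R (qnum d) (qnum m)"
proof -
  obtain k where k: "m = d * k" using assms(2) by auto
  let ?y = "fls_X_intpow (int d) :: rat fls"
  have "qnum m = qnum d * (\<Sum>i<k. ?y ^ i)"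
    unfolding k qnum_mult by (simp add: power_diff_1_eq qbr_def)
  then show ?thesis
    unfolding rdvd_def using R by (intro bexI[of _ "\<Sum>i<k. ?y ^ i"]) (auto intro!: lsub_sum lsub_power lsub_X)
qed

lemma qnum_bezout:
  assumes R: "lsubring R" shows "\<exists>u\<in>R. \<exists>v\<in>R. u * qnum a + v * qnum b = qnum (gcd a b)"
proof (induction a b rule: gcd_nat_induct)
  case (base a)
  show ?case using lsub_zero[OF R] lsub_one[OF R]
    by (intro bexI[of _ 1] bexI[of _ 0]) auto
next
  case (step a b)
  then obtain u v where uv: "u \<in> R" "v \<in> R" "u * qnum b + v * qnum (a mod b) = qnum (gcd a b)"
    by (metis gcd_red_nat)
  obtain w where w: "w \<in> R" "qnum (b * (a div b)) = qnum b * w"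
    using qnum_rdvd[OF R, of b "b * (a div b)"] unfolding rdvd_def by auto
  let ?x = "fls_X_intpow (int (a mod b))"
  have "qnum a = qnum (a mod b) + ?x * qnum (b * (a div b))"
    using qnum_add[of "a mod b" "b * (a div b)"] by simp
  then have "v * qnum a + (u - v * ?x * w) * qnum b = qnum (gcd a b)"
    using uv(3) w(2) by (simp add: algebra_simps)
  then show ?case
    using uv w R by (intro bexI[of _ v] bexI[of _ "u - v * ?x * w"]) (auto intro!: lsub_diff lsub_mult lsub_X)
qed

lemma qnum_mult_mod:
  assumes R: "lsubring R" shows "\<exists>s\<in>R. qnum (g * k) = qnum g * (of_nat k + qnum g * s)"
proof (induction k)
  case 0
  then show ?case using lsub_zero[OF R] by (auto simp: qbr_def)
next
  case (Suc k)
  let ?y = "fls_X_intpow (int g) :: rat fls"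
  obtain s where s: "s \<in> R" "qnum (g * k) = qnum g * (of_nat k + qnum g * s)"
    using Suc by auto
  have y: "qnum g = ?y - 1" by (simp add: qbr_def)
  have "qnum (g * Suc k) = ?y * qnum (g * k) + qnum g"
    unfolding qnum_mult y by (simp add: algebra_simps)
  also have "\<dots> = qnum g * (of_nat (Suc k) + qnum g * (of_nat k + ?y * s))"
    unfolding s(2) y by (simp add: algebra_simps)
  finally show ?case
    using s R by (intro bexI[of _ "of_nat k + ?y * s"]) (auto intro!: lsub_add lsub_mult lsub_of_nat lsub_X)
qed

section \<open>Moebius inversion and cyclotomic polynomials\<close>

lemma moebius_mult_prime:
  assumes p: "prime p" and np: "\<not> p dvd c" and c: "c > 0"
  shows "moebius (p * c) = - moebius c"
proof -
  have cop: "coprime p c" using p np by (simp add: prime_imp_coprime)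
  have sq: "squarefree (p * c) \<longleftrightarrow> squarefree c"
    using squarefree_mult_coprime[OF cop] squarefree_multD(2)[of p c] squarefree_prime[OF p] by blast
  have pf: "prime_factors (p * c) = insert p (prime_factors c)"
    using prime_factors_product[of p c] c p by (simp add: prime_prime_factors prime_gt_0_nat)
  have "p \<notin> prime_factors c" using np by auto
  then show ?thesis unfolding moebius_def using sq pf by simp
qed

text \<open>Divisors
  divisible by a fixed prime \<open>p | N\<close> cancel those not divisible by \<open>p\<close>.\<close>
lemma moebius_sum:
  assumes N: "N > 0" shows "(\<Sum>c | c dvd N. moebius c) = (if N = 1 then 1 else 0)"
proof (cases "N = 1")
  case True
  then have "{c. c dvd N} = {1}" by auto
  then show ?thesis using True by (simp add: moebius_def)
next
  case False
  obtain p where p: "prime p" "p dvd N" using prime_factor_nat[OF False] by auto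
  define A where "A = {c. c dvd N \<and> \<not> p dvd c}"
  define B where "B = {c. c dvd N \<and> p dvd c}"
  have fin: "finite A" "finite B" using N unfolding A_def B_def by auto
  have split: "{c. c dvd N} = A \<union> B" "A \<inter> B = {}" unfolding A_def B_def by auto
  have sub: "(\<lambda>c. p * c) ` A \<subseteq> B"
    using p unfolding A_def B_def by (auto simp: prime_imp_coprime divides_mult)
  have zero: "moebius x = 0" if "x \<in> B - (\<lambda>c. p * c) ` A" for x
  proof -
    from that obtain c where c: "x = p * c" "x dvd N"
      unfolding B_def by auto
    then have "c dvd N" by (auto intro: dvd_mult_right)
    then have "p dvd c" using that c unfolding A_def by auto
    then have "p ^ 2 dvd x" using c by (auto simp: power2_eq_square)
    then have "\<not> squarefree x" using p unfolding squarefree_def by auto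
    then show ?thesis by (simp add: moebius_def)
  qed
  have "sum moebius B = sum moebius ((\<lambda>c. p * c) ` A)"
    using sum.mono_neutral_left[OF fin(2) sub, of moebius] zero by simp
  also have "\<dots> = (\<Sum>c\<in>A. moebius (p * c))"
    using p by (subst sum.reindex) (auto simp: inj_on_def)
  also have "\<dots> = (\<Sum>c\<in>A. - moebius c)"
    using p N unfolding A_def by (intro sum.cong refl moebius_mult_prime) (auto intro!: Nat.gr0I)
  finally show ?thesis
    using False fin split by (simp add: sum.union_disjoint sum_negf)
qed

lemma prod_powi_sum: "x \<noteq> 0 \<Longrightarrow> (\<Prod>i\<in>S. x powi f i) = x powi (\<Sum>i\<in>S. f i)"
  for x :: "rat fls"
  by (induction S rule: infinite_finite_induct) (auto simp: power_int_add)

lemma cyclo_qnum: "cyclo d = (\<Prod>e | e dvd d. qnum e powi moebius (d div e))"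
  by (simp add: cyclo_def qbr_def)

lemma cyclo_prod:
  assumes n: "n > 0" shows "(\<Prod>d | d dvd n. cyclo d) = qnum n"
proof -
  let ?D = "\<lambda>n. {d::nat. d dvd n}"
  have fin: "finite (?D n)" using n by simp
  have "(\<Prod>d\<in>?D n. cyclo d) = (\<Prod>d\<in>?D n. \<Prod>e\<in>{e \<in> ?D n. e dvd d}. qnum e powi moebius (d div e))"
    unfolding cyclo_qnum
    by (intro prod.cong refl arg_cong2[where f = prod]) (auto intro: dvd_trans)
  also have "\<dots> = (\<Prod>e\<in>?D n. \<Prod>d | d \<in> ?D n \<and> e dvd d. qnum e powi moebius (d div e))"
    by (rule prod.swap_restrict[OF fin fin])
  also have "\<dots> = (\<Prod>e\<in>?D n. if e = n then qnum e else 1)"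
  proof (intro prod.cong refl)
    fix e assume e: "e \<in> ?D n"
    then have epos: "e > 0" using n by (auto intro!: Nat.gr0I)
    obtain k where k: "n = e * k" using e by auto
    have "{d. d \<in> ?D n \<and> e dvd d} = (\<lambda>c. e * c) ` ?D k"
      using epos by (auto simp: k)
    then have "(\<Sum>d | d \<in> ?D n \<and> e dvd d. moebius (d div e)) = (\<Sum>c \<in> ?D k. moebius c)"
      using epos by (simp add: sum.reindex inj_on_def)
    also have "\<dots> = (if e = n then 1 else 0)"
      using n k epos by (subst moebius_sum) auto
    finally show "(\<Prod>d | d \<in> ?D n \<and> e dvd d. qnum e powi moebius (d div e)) = (if e = n then qnum e else 1)"
      using qnum_nonzero[OF epos] by (simp add: prod_powi_sum)
  qed
  also have "\<dots> = qnum n" using fin by (subst prod.delta) auto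
  finally show ?thesis .
qed

lemma cyclo_nonzero: assumes "m > 0" shows "cyclo m \<noteq> 0"
  using cyclo_prod[OF assms] qnum_nonzero[OF assms] assms
  by (metis (mono_tags) dvd_refl finite_divisors_nat mem_Collect_eq prod_zero_iff)

section \<open>Cyclotomic polynomials are Laurent polynomials with integer coefficients\<close>

text \<open>\<open>1/(q\<^sup>e - 1) = -(1 + q\<^sup>e + q\<^sup>2\<^sup>e + \<dots>)\<close> has integer coefficients.\<close>
lemma inverse_qnum_ZS:
  assumes e: "e > 0" shows "inverse (qnum e) \<in> ZS"
proof -
  define S :: "rat fls" where "S = fps_to_fls (Abs_fps (\<lambda>n. if e dvd n then 1 else 0))"
  have Sn: "S $$ n = (if n < 0 then 0 else if e dvd nat n then 1 else 0)" for n
    unfolding S_def by simp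
  have "qnum e * (- S) = 1"
  proof (rule fls_eqI)
    fix n
    have "qnum e * (- S) = S - fls_shift (- int e) S"
      by (simp add: qbr_def algebra_simps fls_X_intpow_times_conv_shift)
    then have "(qnum e * (- S)) $$ n = S $$ n - S $$ (n - int e)" by simp
    also have "\<dots> = (1::rat fls) $$ n"
    proof (cases "n < 0")
      case False
      then obtain m where m: "n = int m" by (metis nonneg_eq_int not_less)
      show ?thesis
      proof (cases "m < e")
        case True
        then have "\<not> e dvd m \<or> m = 0" by (auto dest: dvd_imp_le)
        then show ?thesis using True m by (auto simp: Sn)
      next
        case False
        then have "nat (int m - int e) = m - e" by simp
        moreover have "e dvd (m - e) \<longleftrightarrow> e dvd m"
          using False by (simp add: dvd_minus_self)
        ultimately show ?thesis using m False e by (auto simp: Sn)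
      qed
    qed (simp add: Sn)
    finally show "(qnum e * (- S)) $$ n = (1::rat fls) $$ n" .
  qed
  then have "inverse (qnum e) = - S" by (rule inverse_unique)
  then show ?thesis unfolding ZS_def by (simp add: Sn)
qed

lemma cyclo_ZS:
  assumes m: "m > 0" shows "cyclo m \<in> ZS"
  unfolding cyclo_qnum
proof (rule lsub_prod[OF lsubring_ZS])
  fix e assume "e \<in> {e. e dvd m}"
  then have e: "e > 0" using m by (auto intro!: Nat.gr0I)
  show "qnum e powi moebius (m div e) \<in> ZS"
  proof (cases "moebius (m div e) \<ge> 0")
    case True
    then show ?thesis
      using lsub_power[OF lsubring_ZS qnum_in[OF lsubring_ZS]]
      by (metis nat_0_le power_int_of_nat)
  next
    case False
    then have "qnum e powi moebius (m div e) = inverse (qnum e) ^ nat (- moebius (m div e))"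
      by (metis neg_0_le_iff_le nat_0_le power_int_minus power_int_of_nat power_inverse minus_minus linorder_linear)
    then show ?thesis using lsub_power[OF lsubring_ZS inverse_qnum_ZS[OF e]] by simp
  qed
qed

definition qquot :: "nat \<Rightarrow> nat \<Rightarrow> rat fls" where
  "qquot e g = (\<Prod>c | c dvd e \<and> \<not> c dvd g. cyclo c)"

lemma qnum_qquot:
  assumes g: "g > 0" "g dvd e" and e: "e > 0" shows "qnum e = qnum g * qquot e g"
proof -
  have eq: "{c. c dvd e} = {c. c dvd g} \<union> {c. c dvd e \<and> \<not> c dvd g}"
    using dvd_trans[OF _ g(2)] by blast
  have fin: "finite {c. c dvd g}" "finite {c. c dvd e \<and> \<not> c dvd g}" using g e by auto
  have "qnum e = (\<Prod>c | c dvd e. cyclo c)" using cyclo_prod[OF e] by simp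
  also have "\<dots> = (\<Prod>c | c dvd g. cyclo c) * qquot e g"
    unfolding eq qquot_def by (rule prod.union_disjoint[OF fin]) auto
  also have "\<dots> = qnum g * qquot e g" using cyclo_prod[OF g(1)] by simp
  finally show ?thesis .
qed

lemma cyclo_rdvd_prod:
  assumes R: "lsubring R" and S: "finite S" "e \<in> S" and cR: "\<And>c. c \<in> S \<Longrightarrow> cyclo c \<in> R"
  shows "rdvd R (cyclo e) (\<Prod>c\<in>S. cyclo c)"
  unfolding rdvd_def prod.remove[OF S]
  using cR by (auto intro!: lsub_prod[OF R])

text \<open>If neither of \<open>d, m\<close> divides the other, \<open>\<Phi>\<^sub>d\<close> and \<open>\<Phi>\<^sub>m\<close> are coprime over every
  subring containing the relevant cyclotomic polynomials (in particular over \<open>\<int>[q,q\<inverse>]\<close>):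
  dividing the Bezout identity for \<open>{d}\<^sub>q, {m}\<^sub>q\<close> by \<open>{gcd d m}\<^sub>q\<close> gives a Bezout identity
  for two products containing \<open>\<Phi>\<^sub>d\<close> resp.\ \<open>\<Phi>\<^sub>m\<close>.\<close>
lemma cyclo_coprime:
  assumes R: "lsubring R" and dm: "d > 0" "m > 0" "\<not> d dvd m" "\<not> m dvd d"
    and cR: "\<And>c. c dvd d \<or> c dvd m \<Longrightarrow> cyclo c \<in> R"
  shows "rcoprime R (cyclo d) (cyclo m)"
proof -
  define g where "g = gcd d m"
  have g: "g > 0" "g dvd d" "g dvd m" "\<not> d dvd g" "\<not> m dvd g"
    using dm unfolding g_def by (auto dest: dvd_trans)
  obtain u v where uv: "u \<in> R" "v \<in> R" "u * qnum d + v * qnum m = qnum g"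
    using qnum_bezout[OF R, of d m] unfolding g_def by auto
  have "qnum g * (u * qquot d g + v * qquot m g) = qnum g * 1"
    using uv(3) qnum_qquot[OF g(1,2) dm(1)] qnum_qquot[OF g(1,3) dm(2)] by (simp add: algebra_simps)
  then have "rcoprime R (qquot d g) (qquot m g)"
    unfolding rcoprime_def using uv qnum_nonzero[OF g(1)] by auto
  moreover have "rdvd R (cyclo d) (qquot d g)" "rdvd R (cyclo m) (qquot m g)"
    unfolding qquot_def using dm g cR by (auto intro!: cyclo_rdvd_prod[OF R])
  ultimately show ?thesis by (rule rcoprime_rdvd[OF R])
qed

text \<open>Over \<open>\<rat>[q,q\<inverse>]\<close> also \<open>\<Phi>\<^sub>d\<close> and \<open>\<Phi>\<^sub>e\<close> for \<open>e | d\<close>, \<open>e \<noteq> d\<close>, are coprime: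
  \<open>{d}\<^sub>q/{e}\<^sub>q \<equiv> d/e\<close> modulo \<open>{e}\<^sub>q\<close>, and \<open>d/e\<close> is invertible over \<open>\<rat>\<close>.\<close>
lemma cyclo_coprime_QP_dvd:
  assumes d: "d > 0" and e: "e > 0" "e dvd d" "e \<noteq> d"
    and cR: "\<And>c. c dvd d \<Longrightarrow> cyclo c \<in> QP"
  shows "rcoprime QP (cyclo d) (cyclo e)"
proof -
  obtain k where k: "d = e * k" using e by auto
  then have k0: "k > 0" "d > 0" using d by (auto intro!: Nat.gr0I)
  obtain s where s: "s \<in> QP" "qnum d = qnum e * (of_nat k + qnum e * s)"
    using qnum_mult_mod[OF lsubring_QP, of e k] k by auto
  define c :: "rat fls" where "c = fls_const (inverse (of_nat k))"
  have "qquot d e = of_nat k + qnum e * s"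
    using s(2) qnum_qquot[OF e(1,2) k0(2)] qnum_nonzero[OF e(1)] by simp
  moreover have "c * of_nat k = 1" using k0 unfolding c_def by (simp add: fls_of_nat)
  ultimately have bezout: "c * qquot d e + (- c * s) * qnum e = 1" by (simp add: algebra_simps)
  have "c \<in> QP" "- c * s \<in> QP"
    using s fls_const_QP unfolding c_def by (auto intro!: lsub_mult[OF lsubring_QP] lsub_uminus[OF lsubring_QP])
  with bezout have "rcoprime QP (qquot d e) (qnum e)"
    unfolding rcoprime_def by blast
  moreover have "rdvd QP (cyclo d) (qquot d e)"
  proof -
    have "\<not> d dvd e" using e dvd_antisym by blast
    then show ?thesis
      unfolding qquot_def using k0 cR by (intro cyclo_rdvd_prod[OF lsubring_QP]) auto
  qed
  moreover have "rdvd QP (cyclo e) (qnum e)"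
    unfolding cyclo_prod[OF e(1), symmetric] using e(1)
    by (intro cyclo_rdvd_prod[OF lsubring_QP] cR dvd_trans[OF _ e(2)]) auto
  ultimately show ?thesis by (rule rcoprime_rdvd[OF lsubring_QP])
qed

lemma cyclo_coprime_QP:
  assumes de: "d > 0" "e > 0" "d \<noteq> e" and cR: "\<And>c. c dvd d \<or> c dvd e \<Longrightarrow> cyclo c \<in> QP"
  shows "rcoprime QP (cyclo d) (cyclo e)"
proof -
  consider "e dvd d" | "d dvd e" | "\<not> d dvd e" "\<not> e dvd d" by blast
  then show ?thesis
  proof cases
    case 1
    then show ?thesis using de cR by (intro cyclo_coprime_QP_dvd) auto
  next
    case 2
    then have "rcoprime QP (cyclo e) (cyclo d)"
      using de cR by (intro cyclo_coprime_QP_dvd) auto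
    then show ?thesis by (rule rcoprime_sym)
  next
    case 3
    then show ?thesis using de cR by (intro cyclo_coprime[OF lsubring_QP]) auto
  qed
qed

text \<open>\<open>\<Phi>\<^sub>m\<close> has finite support, by strong induction on \<open>m\<close>: the proper cyclotomic factors
  \<open>\<Phi>\<^sub>d\<close> (\<open>d | m\<close>, \<open>d < m\<close>) of \<open>{m}\<^sub>q\<close> are pairwise coprime Laurent polynomials dividing \<open>{m}\<^sub>q\<close>,
  so their product divides \<open>{m}\<^sub>q\<close> in \<open>\<rat>[q,q\<inverse>]\<close>, and \<open>\<Phi>\<^sub>m\<close> is the quotient.\<close>
lemma cyclo_QP: "m > 0 \<Longrightarrow> cyclo m \<in> QP"
proof (induction m rule: less_induct)
  case (less m)
  define D where "D = {d. d dvd m} - {m}"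
  have D: "finite D" "\<And>d. d \<in> D \<Longrightarrow> 0 < d \<and> d < m \<and> d dvd m"
    using less.prems unfolding D_def by (auto intro!: gr0I dest: dvd_imp_le)
  have IH: "cyclo c \<in> QP" if "c dvd d" "d \<in> D" for c d
  proof -
    have "0 < d" "d < m" using D(2)[OF that(2)] by auto
    moreover have "c \<le> d" "0 < c" using that(1) \<open>0 < d\<close> by (auto dest: dvd_imp_le intro!: gr0I)
    ultimately show ?thesis using less.IH by simp
  qed
  have "rdvd QP (prod cyclo D) (qnum m)"
  proof (rule rdvd_prod_coprime[OF lsubring_QP D(1)])
    fix d assume d: "d \<in> D"
    show "cyclo d \<in> QP" using IH[OF dvd_refl d] .
    have "rdvd QP (cyclo d) (\<Prod>c | c dvd d. cyclo c)"
      using d D(2) IH by (intro cyclo_rdvd_prod[OF lsubring_QP]) auto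
    then have "rdvd QP (cyclo d) (qnum d)"
      using D(2)[OF d] by (simp add: cyclo_prod)
    moreover have "rdvd QP (qnum d) (qnum m)"
      using D(2)[OF d] by (intro qnum_rdvd[OF lsubring_QP]) simp
    ultimately show "rdvd QP (cyclo d) (qnum m)"
      by (rule rdvd_trans[OF lsubring_QP])
  next
    fix d d' assume "d \<in> D" "d' \<in> D" "d \<noteq> d'"
    then show "rcoprime QP (cyclo d) (cyclo d')"
      using IH D(2) by (intro cyclo_coprime_QP) auto
  qed (rule qnum_in[OF lsubring_QP])
  then obtain w where w: "w \<in> QP" "qnum m = prod cyclo D * w"
    unfolding rdvd_def by auto
  have "qnum m = cyclo m * prod cyclo D"
    unfolding D_def cyclo_prod[OF less.prems, symmetric]
    using less.prems by (intro prod.remove) auto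
  moreover have "prod cyclo D \<noteq> 0" using D cyclo_nonzero by auto
  ultimately show ?case using w by (simp add: mult.commute)
qed

lemma cyclo_LP: "m > 0 \<Longrightarrow> cyclo m \<in> LP"
  using cyclo_QP cyclo_ZS LP_eq by auto

section \<open>Factorisation of \<open>f\<^sub>l\<^sub>,\<^sub>k\<close> into cyclotomic polynomials\<close>

lemma div_add_carry:
  fixes x y d :: nat assumes "d > 0"
  shows "(x + y + 1) div d = x div d + y div d + (x mod d + y mod d + 1) div d"
proof -
  have eq: "x + y + 1 = (x mod d + y mod d + 1) + d * (x div d + y div d)"
    by (simp add: algebra_simps)
  show ?thesis unfolding eq using assms by (simp only: div_mult_self2 not_gr0 add.commute)
qed

lemma carry_le_one:
  fixes x y d :: nat assumes d: "d > 0" shows "(x mod d + y mod d + 1) div d \<le> 1"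
proof -
  have "x mod d + y mod d + 1 < d * 2"
    using mod_less_divisor[OF d, of x] mod_less_divisor[OF d, of y] by linarith
  then show ?thesis using d by (simp add: div_less_iff_less_mult less_Suc_eq_le[symmetric])
qed

lemma carry_eq_one:
  fixes x y d :: nat assumes "d > 0" "d dvd y + 1" shows "(x mod d + y mod d + 1) div d = 1"
proof -
  have "y mod d + 1 = d"
    using assms by (metis Suc_eq_plus1 Zero_not_Suc dvd_imp_mod_0 mod_Suc)
  then have "x mod d + y mod d + 1 = x mod d + d * 1" by simp
  then show ?thesis using assms(1) by (simp only: div_mult_self2 not_gr0 mod_div_trivial)
qed

definition cmono :: "nat \<Rightarrow> (nat \<Rightarrow> nat) \<Rightarrow> rat fls" where
  "cmono N e = (\<Prod>d\<in>{1..N}. cyclo d ^ e d)"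

lemma cmono_LP: "cmono N e \<in> LP"
  unfolding cmono_def by (intro lsub_prod[OF lsubring_LP] lsub_power[OF lsubring_LP] cyclo_LP) auto

lemma cmono_mult: "cmono N e * cmono N e' = cmono N (\<lambda>d. e d + e' d)"
  unfolding cmono_def by (simp add: power_add prod.distrib)

lemma cmono_nonzero: "cmono N e \<noteq> 0"
  unfolding cmono_def using cyclo_nonzero by auto

lemma cmono_cong: "(\<And>d. 1 \<le> d \<Longrightarrow> d \<le> N \<Longrightarrow> e d = e' d) \<Longrightarrow> cmono N e = cmono N e'"
  unfolding cmono_def by (intro prod.cong refl) auto

lemma qfact_Suc: "qfact (Suc n) = qfact n * qnum (Suc n)"
proof -
  have "qfact (Suc n) = qnum (Suc n) * (\<Prod>j<n. qbr (int (Suc n) - int (Suc j)))"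
    unfolding qfact_def qbrn_def by (subst prod.lessThan_Suc_shift) simp
  then show ?thesis unfolding qfact_def qbrn_def by simp
qed

lemma qnum_cmono:
  assumes "n \<le> N" "0 < n" shows "qnum n = cmono N (\<lambda>d. if d dvd n then 1 else 0)"
proof -
  have "{d \<in> {1..N}. d dvd n} = {d. d dvd n}"
    using assms by (auto dest: dvd_imp_le intro: gr0I simp: Suc_le_eq)
  then have "cmono N (\<lambda>d. if d dvd n then 1 else 0) = (\<Prod>d | d dvd n. cyclo d)"
    unfolding cmono_def by (simp add: prod.inter_filter[symmetric] if_distrib cong: if_cong)
  then show ?thesis using cyclo_prod[OF assms(2)] by simp
qed

text \<open>In \<open>{n}\<^sub>q!\<close> the exponent of \<open>\<Phi>\<^sub>d\<close> is \<open>\<lfloor>n/d\<rfloor>\<close>: \<open>\<Phi>\<^sub>d\<close> divides exactly \<open>\<lfloor>n/d\<rfloor>\<close> of the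
  factors \<open>q\<^sup>j - 1\<close>, \<open>1 \<le> j \<le> n\<close>.\<close>
lemma qfact_cmono: "n \<le> N \<Longrightarrow> qfact n = cmono N (\<lambda>d. n div d)"
proof (induction n)
  case 0
  then show ?case by (simp add: qfact_def qbrn_def cmono_def)
next
  case (Suc n)
  then have "qfact (Suc n) = cmono N (\<lambda>d. n div d) * cmono N (\<lambda>d. if d dvd Suc n then 1 else 0)"
    using qfact_Suc qnum_cmono[of "Suc n" N] by simp
  also have "\<dots> = cmono N (\<lambda>d. Suc n div d)"
    unfolding cmono_mult by (rule cmono_cong) (auto simp: div_Suc dvd_eq_mod_eq_0)
  finally show ?case .
qed

text \<open>Exponent of \<open>\<Phi>\<^sub>d\<close> in \<open>g\<^sub>l\<close>, and in the cofactor \<open>f\<^sub>l\<^sub>,\<^sub>k / g\<^sub>l\<close>.\<close>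
definition gexp :: "nat \<Rightarrow> nat \<Rightarrow> nat" where
  "gexp l d = (l + 1) div d - 1"

definition hexp :: "nat \<Rightarrow> nat \<Rightarrow> nat \<Rightarrow> nat" where
  "hexp l k d = (l - k) div d + k div d - gexp l d"

definition hfac :: "nat \<Rightarrow> nat \<Rightarrow> rat fls" where
  "hfac l k = cmono l (hexp l k)"

lemma hfac_LP: "hfac l k \<in> LP"
  by (simp add: hfac_def cmono_LP)

lemma cyclo_powi_texp: "(\<Prod>m\<in>{1..l}. cyclo m powi texp l m) = cmono l (gexp l)"
  unfolding cmono_def
proof (intro prod.cong refl)
  fix m assume m: "m \<in> {1..l}"
  then have "texp l m = int (gexp l m)"
    using floor_divide_of_nat_eq[of "l + 1" m] unfolding texp_def gexp_def
    by (auto simp: div_greater_zero_iff Suc_le_eq)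
  then show "cyclo m powi texp l m = cyclo m ^ gexp l m" by simp
qed

text \<open>\<open>f\<^sub>l\<^sub>,\<^sub>k = g\<^sub>l \<cdot> h\<^sub>l\<^sub>,\<^sub>k\<close>, where \<open>g\<^sub>l\<close> has exponent \<open>\<lfloor>(l+1)/d\<rfloor> - 1\<close> at \<open>\<Phi>\<^sub>d\<close>: by the carry
  bound, \<open>\<lfloor>(l-k)/d\<rfloor> + \<lfloor>k/d\<rfloor>\<close> is at least that.\<close>
lemma fq_factor:
  assumes "k \<le> l" shows "fq l k = cmono l (gexp l) * hfac l k"
proof -
  have "fq l k = cmono l (\<lambda>d. (l - k) div d) * cmono l (\<lambda>d. k div d)"
    unfolding fq_def using assms by (simp add: qfact_cmono)
  also have "\<dots> = cmono l (\<lambda>d. gexp l d + hexp l k d)"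
    unfolding cmono_mult
  proof (rule cmono_cong)
    fix d :: nat assume "1 \<le> d"
    then have "(l - k + k + 1) div d \<le> (l - k) div d + k div d + 1"
      using div_add_carry[of d "l - k" k] carry_le_one[of d "l - k" k] by simp
    then show "(l - k) div d + k div d = gexp l d + hexp l k d"
      using assms unfolding gexp_def hexp_def by simp
  qed
  also have "\<dots> = cmono l (gexp l) * hfac l k"
    unfolding hfac_def cmono_mult ..
  finally show ?thesis .
qed

lemma hexp_zero:
  assumes "1 \<le> d" "d dvd k + 1" "k \<le> l" shows "hexp l k d = 0"
proof -
  have "(l - k + k + 1) div d = (l - k) div d + k div d + 1"
    using assms div_add_carry[of d "l - k" k] carry_eq_one[of d k "l - k"] by simp
  then show ?thesis using assms unfolding hexp_def gexp_def by simp
qed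

section \<open>The ideal generated by the cofactors is the unit ideal\<close>

definition lspan :: "(nat \<Rightarrow> rat fls) \<Rightarrow> nat \<Rightarrow> rat fls set" where
  "lspan f l = {x. \<exists>c. (\<forall>k\<le>l. c k \<in> LP) \<and> x = (\<Sum>k\<le>l. c k * f k)}"

lemma Iq_lspan: "Iq l = lspan (fq l) l"
  unfolding Iq_def lspan_def ..

lemma lspan_gen:
  assumes "k \<le> l" shows "f k \<in> lspan f l"
proof -
  have "(\<Sum>j\<le>l. (if j = k then 1 else 0) * f j) = (\<Sum>j\<le>l. if j = k then f j else 0)"
    by (intro sum.cong) auto
  also have "\<dots> = f k" using assms by simp
  finally show ?thesis
    unfolding lspan_def using lsub_zero[OF lsubring_LP] lsub_one[OF lsubring_LP]
    by (intro CollectI exI[of _ "\<lambda>j. if j = k then 1 else 0"]) auto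
qed

lemma lspan_cong: "(\<And>k. k \<le> l \<Longrightarrow> f k = f' k) \<Longrightarrow> lspan f l = lspan f' l"
  unfolding lspan_def by (metis (no_types, lifting) atMost_iff sum.cong)

lemma rideal_lspan: "rideal LP (lspan f l)"
  unfolding rideal_def
proof (intro conjI ballI)
  show "0 \<in> lspan f l"
    unfolding lspan_def using lsub_zero[OF lsubring_LP] by (intro CollectI exI[of _ "\<lambda>_. 0"]) simp
  fix x y assume "x \<in> lspan f l" "y \<in> lspan f l"
  then obtain c c' where "\<forall>k\<le>l. c k \<in> LP" "\<forall>k\<le>l. c' k \<in> LP"
    "x = (\<Sum>k\<le>l. c k * f k)" "y = (\<Sum>k\<le>l. c' k * f k)" unfolding lspan_def by auto
  then show "x + y \<in> lspan f l"
    unfolding lspan_def by (intro CollectI exI[of _ "\<lambda>k. c k + c' k"])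
      (simp add: sum.distrib distrib_right lsub_add[OF lsubring_LP])
next
  fix x r assume "x \<in> lspan f l" "r \<in> LP"
  then obtain c where "\<forall>k\<le>l. c k \<in> LP" "x = (\<Sum>k\<le>l. c k * f k)" unfolding lspan_def by auto
  with \<open>r \<in> LP\<close> show "r * x \<in> lspan f l"
    unfolding lspan_def by (intro CollectI exI[of _ "\<lambda>k. r * c k"])
      (simp add: sum_distrib_left mult.assoc lsub_mult[OF lsubring_LP])
qed

lemma lspan_scale: "lspan (\<lambda>k. G * f k) l = {G * x | x. x \<in> lspan f l}"
proof -
  have "(\<Sum>k\<le>l. c k * (G * f k)) = G * (\<Sum>k\<le>l. c k * f k)" for c
    by (simp add: sum_distrib_left algebra_simps)
  then show ?thesis unfolding lspan_def by auto
qed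

lemma rideal_one:
  assumes "rideal LP I" "I \<subseteq> LP" "1 \<in> I" shows "I = LP"
  using assms unfolding rideal_def by (metis mult.right_neutral subsetI subset_antisym)

text \<open>Downward induction on \<open>m\<close>: each \<open>\<Phi>\<^sub>m\<close>, \<open>1 \<le> m \<le> l\<close>, is a unit modulo the ideal
  \<open>J\<^sub>l\<close> generated by the \<open>h\<^sub>l\<^sub>,\<^sub>k\<close>.  The generator \<open>h\<^sub>l\<^sub>,\<^sub>m\<^sub>-\<^sub>1\<close> avoids \<open>\<Phi>\<^sub>d\<close> for \<open>d | m\<close>; every
  other factor \<open>\<Phi>\<^sub>d\<close> is a unit modulo \<open>J\<^sub>l + \<Phi>\<^sub>m\<close>: for \<open>d > m\<close> by induction, for \<open>d < m\<close>
  because \<open>\<Phi>\<^sub>d\<close> and \<open>\<Phi>\<^sub>m\<close> are coprime.  As \<open>h\<^sub>l\<^sub>,\<^sub>m\<^sub>-\<^sub>1 \<in> J\<^sub>l\<close>, \<open>\<Phi>\<^sub>m\<close> is a unit modulo \<open>J\<^sub>l\<close>.\<close>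
lemma cyclo_unit_mod:
  "1 \<le> m \<Longrightarrow> m \<le> l \<Longrightarrow> unit_mod LP (lspan (hfac l) l) (cyclo m)"
proof (induction "l - m" arbitrary: m rule: less_induct)
  case less
  let ?J = "lspan (hfac l) l"
  have J: "rideal LP ?J" by (rule rideal_lspan)
  have m: "0 < m" using less.prems by simp
  have "unit_mod LP (ideal_add LP ?J (cyclo m)) (\<Prod>d\<in>{1..l}. cyclo d ^ hexp l (m - 1) d)"
  proof (rule unit_mod_prod_power[OF lsubring_LP rideal_add[OF lsubring_LP J cyclo_LP[OF m]]])
    fix d assume d: "d \<in> {1..l}"
    show "cyclo d \<in> LP" using d by (intro cyclo_LP) auto
    consider "d dvd m" | "m < d" | "d < m" "\<not> d dvd m" by fastforce
    then show "hexp l (m - 1) d = 0 \<or> unit_mod LP (ideal_add LP ?J (cyclo m)) (cyclo d)"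
    proof cases
      case 1
      then show ?thesis using d less.prems by (intro disjI1 hexp_zero) auto
    next
      case 2
      then have "unit_mod LP ?J (cyclo d)" using less d by auto
      then show ?thesis by (intro disjI2 unit_mod_mono[OF ideal_add_supset[OF lsubring_LP J]])
    next
      case 3
      then have "rcoprime LP (cyclo m) (cyclo d)"
        using d less.prems by (intro cyclo_coprime[OF lsubring_LP] cyclo_LP)
          (auto dest: dvd_imp_le intro!: gr0I)
      then have "unit_mod LP ((\<lambda>r. r * cyclo m) ` LP) (cyclo d)"
        by (simp add: rcoprime_unit_mod)
      then show ?thesis
        by (intro disjI2 unit_mod_mono[OF ideal_add_supset_principal[OF lsubring_LP J]])
    qed
  qed
  then show ?case
    using less.prems lspan_gen[of "m - 1" l "hfac l"]
    by (intro unit_mod_ideal_add[OF J]) (auto simp: hfac_def cmono_def)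
qed

text \<open>The cofactors \<open>h\<^sub>l\<^sub>,\<^sub>0, \<dots>, h\<^sub>l\<^sub>,\<^sub>l\<close> generate the unit ideal: \<open>h\<^sub>l\<^sub>,\<^sub>l\<close> lies in it and is a
  product of cyclotomic polynomials that are all units modulo it.\<close>
lemma lspan_hfac: "lspan (hfac l) l = LP"
proof (rule rideal_one[OF rideal_lspan])
  show "lspan (hfac l) l \<subseteq> LP"
    unfolding lspan_def using hfac_LP by (auto intro!: lsub_sum[OF lsubring_LP] lsub_mult[OF lsubring_LP])
  have "unit_mod LP (lspan (hfac l) l) (\<Prod>d\<in>{1..l}. cyclo d ^ hexp l l d)"
    by (rule unit_mod_prod_power[OF lsubring_LP rideal_lspan]) (auto intro: cyclo_LP cyclo_unit_mod)
  then show "1 \<in> lspan (hfac l) l"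
    using lspan_gen[of l l "hfac l"]
    by (intro unit_mod_self[OF rideal_lspan]) (auto simp: hfac_def cmono_def)
qed

lemma Iq_principal: "Iq l = {cmono l (gexp l) * c | c. c \<in> LP}"
proof -
  have "Iq l = lspan (\<lambda>k. cmono l (gexp l) * hfac l k) l"
    unfolding Iq_lspan by (rule lspan_cong) (rule fq_factor)
  then show ?thesis by (simp add: lspan_scale lspan_hfac)
qed

lemma principal_is_lgcd:
  assumes I: "Iq l = {G * c | c. c \<in> LP}" and G: "G \<in> LP" shows "is_lgcd G l"
  unfolding is_lgcd_def
proof (intro conjI ballI allI impI G)
  fix k assume "k \<le> l"
  then have "fq l k \<in> Iq l" unfolding Iq_lspan by (rule lspan_gen)
  then show "ldvd G (fq l k)" unfolding I ldvd_def by auto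
next
  fix d assume d: "d \<in> LP" "\<forall>k\<le>l. ldvd d (fq l k)"
  then obtain e where e: "\<forall>k\<le>l. e k \<in> LP \<and> fq l k = d * e k"
    unfolding ldvd_def by metis
  have "G \<in> Iq l" unfolding I using lsub_one[OF lsubring_LP] by force
  then obtain c where c: "\<forall>k\<le>l. c k \<in> LP" "G = (\<Sum>k\<le>l. c k * fq l k)"
    unfolding Iq_def by auto
  then have "G = d * (\<Sum>k\<le>l. c k * e k)"
    using e by (simp add: sum_distrib_left algebra_simps)
  moreover have "(\<Sum>k\<le>l. c k * e k) \<in> LP"
    using c e by (auto intro!: lsub_sum[OF lsubring_LP] lsub_mult[OF lsubring_LP])
  ultimately show "ldvd d G" unfolding ldvd_def by blast
qed

lemma lgcd_associated:
  assumes g: "is_lgcd g l" and G: "is_lgcd G l" "G \<noteq> 0"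
  shows "\<exists>u. lunit u \<and> g = u * G"
proof -
  obtain a where a: "a \<in> LP" "g = G * a"
    using g G unfolding is_lgcd_def ldvd_def by blast
  obtain b where b: "b \<in> LP" "G = g * b"
    using g G unfolding is_lgcd_def ldvd_def by blast
  have "G * (a * b) = G * 1" using a(2) b(2) by (metis mult.assoc mult.right_neutral)
  then have "a * b = 1" using G(2) by (metis mult_left_cancel)
  then have "lunit a" unfolding lunit_def using a b by blast
  then show ?thesis using a(2) by (metis mult.commute)
qed

lemma principal_unit_mult:
  assumes "lunit u" shows "{(u * G) * c | c. c \<in> LP} = {G * c | c. c \<in> LP}"
proof -
  obtain v where u: "u \<in> LP" "v \<in> LP" "u * v = 1" using assms unfolding lunit_def by auto
  show ?thesis
  proof (intro set_eqI iffI)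
    fix x assume "x \<in> {(u * G) * c | c. c \<in> LP}"
    then obtain c where "c \<in> LP" "x = G * (u * c)" by (auto simp: algebra_simps)
    then show "x \<in> {G * c | c. c \<in> LP}" using u(1) by (blast intro: lsub_mult[OF lsubring_LP])
  next
    fix x assume "x \<in> {G * c | c. c \<in> LP}"
    then obtain c where "c \<in> LP" "x = (u * G) * (v * c)"
      using u(3) by (auto simp: algebra_simps)
    then show "x \<in> {(u * G) * c | c. c \<in> LP}" using u(2) by (blast intro: lsub_mult[OF lsubring_LP])
  qed
qed

theorem theorem3p1:
  fixes l :: nat
  shows "(\<exists>g. is_lgcd g l) \<and>
         (\<forall>g. is_lgcd g l \<longrightarrow>
              Iq l = {g * c | c. c \<in> LP} \<and>
              (\<exists>u. lunit u \<and> g = u * (\<Prod>m\<in>{1..l}. cyclo m powi texp l m)))"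
proof -
  define G where "G = cmono l (gexp l)"
  have I: "Iq l = {G * c | c. c \<in> LP}" unfolding G_def by (rule Iq_principal)
  have G: "is_lgcd G l" "G \<noteq> 0"
    using principal_is_lgcd[OF I] cmono_LP cmono_nonzero unfolding G_def by auto
  have "Iq l = {g * c | c. c \<in> LP} \<and> (\<exists>u. lunit u \<and> g = u * G)" if g: "is_lgcd g l" for g
  proof -
    obtain u where "lunit u" "g = u * G" using lgcd_associated[OF g G] by blast
    then show ?thesis using I principal_unit_mult by auto
  qed
  then show ?thesis using G(1) cyclo_powi_texp unfolding G_def by auto
qed

end
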